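(* Let $\mathcal{H}=(Q_0,Q_1,\beta)$ be a directed tensor-labeled hypergraph over $\mathbb{R}$. Then the edge Gram operator $L_\beta=\partial_\beta^*\partial_\beta$ on $\mathbb{R}^{Q_1}$ satisfies $$\mathrm{rank}(L_\beta)=|Q_1|-\dim_{\mathbb{R}}\mathcal{Z}(\mathcal{H})=|V_{\mathrm{macro}}|-c_{\mathrm{macro}}-\delta(\mathcal{H}),$$ and this number equals the sum of the multiplicities of the nonzero eigenvalues of $L_\beta$.
   Context: $T(\mathbb{R}^{Q_0})=\bigoplus_{k\ge0}(\mathbb{R}^{Q_0})^{\otimes k}$, equipped with the inner product making the standard basis ($1$ and all $u_1\otimes\cdots\otimes u_k$, $u_i\in Q_0$, identifying $v$ with $\mathbf{1}_v$) orthonormal; $\mathbb{R}^{Q_1}$ has the standard inner product. A directed tensor-labeled hypergraph is $\mathcal{H}=(Q_0,Q_1,\beta)$ ($Q_0,Q_1$ finite) with $\beta:\mathbb{R}^{Q_1}\to T\times T$ linear, $\beta(\mathbf{1}_e)=(A_e,B_e)$. $\partial_\beta:\mathbb{R}^{Q_1}\to T(\mathbb{R}^{Q_0})$, $\mathbf{1}_e\mapsto B_e-A_e$; $\partial_\beta^*$ its adjoint; $\mathcal{Z}(\mathcal{H})=\mathrm{Ker}\,\partial_\beta$. $V_{\mathrm{macro}}=\{A_e\}\cup\{B_e\}$; the macrograph is the directed multigraph on $V_{\mathrm{macro}}$ with edges $Q_1$, $e:A_e\to B_e$; $c_{\mathrm{macro}}$ its number of weakly connected components; $B_{\mathrm{macro}}:\mathbf{1}_e\mapsto\mathbf{1}_{B_e}-\mathbf{1}_{A_e}$;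 $\hat\phi:\mathbb{R}^{V_{\mathrm{macro}}}\to T(\mathbb{R}^{Q_0})$, $\mathbf{1}_w\mapsto w$; $\delta(\mathcal{H})=\dim_{\mathbb{R}}(\mathrm{Im}B_{\mathrm{macro}}\cap\mathrm{Ker}\hat\phi)$. *)

theory Defs
  imports "HOL-Analysis.Analysis" "HOL-Library.Function_Algebras"
    "HOL-Computational_Algebra.Polynomial"
begin

text \<open>Tensor algebra T(R^Q0): real-valued functions on words (lists) over Q0,
  with finite support; the word [] is the unit 1, the word [u1,...,uk] is
  u1 (x) ... (x) uk.\<close>
type_synonym 'v tens = "'v list \<Rightarrow> real"

definition fin_supp :: "('a \<Rightarrow> real) \<Rightarrow> bool" where
  "fin_supp t \<longleftrightarrow> finite {w. t w \<noteq> 0}"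

definition tinner :: "'v tens \<Rightarrow> 'v tens \<Rightarrow> real" where
  "tinner s t = (\<Sum>w\<in>{w. s w \<noteq> 0}. s w * t w)"

definition bdry :: "('e::finite \<Rightarrow> 'v tens) \<Rightarrow> ('e \<Rightarrow> 'v tens) \<Rightarrow> real^'e \<Rightarrow> 'v tens" where
  "bdry A B x = (\<lambda>w. \<Sum>e\<in>UNIV. x $ e * (B e w - A e w))"

definition cycles :: "('e::finite \<Rightarrow> 'v tens) \<Rightarrow> ('e \<Rightarrow> 'v tens) \<Rightarrow> (real^'e) set" where
  "cycles A B = {x. bdry A B x = 0}"

text \<open>Edge Gram operator L = d* d, as its matrix in the standard basis of R^Q1:
  L_{ef} = < d 1_e, d 1_f >.\<close>
definition gramL :: "('e::finite \<Rightarrow> 'v tens) \<Rightarrow> ('e \<Rightarrow> 'v tens) \<Rightarrow> real^'e^'e" where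
  "gramL A B = (\<chi> e f. tinner (B e - A e) (B f - A f))"

definition Vmacro :: "('e \<Rightarrow> 'v tens) \<Rightarrow> ('e \<Rightarrow> 'v tens) \<Rightarrow> 'v tens set" where
  "Vmacro A B = range A \<union> range B"

text \<open>Edges of the macrograph e : A_e -> B_e; weak connectivity = reflexive-transitive
  closure of the symmetrised edge relation.\<close>
definition macro_edges :: "('e \<Rightarrow> 'v tens) \<Rightarrow> ('e \<Rightarrow> 'v tens) \<Rightarrow> ('v tens \<times> 'v tens) set" where
  "macro_edges A B = {(A e, B e) | e. True}"

definition c_macro :: "('e \<Rightarrow> 'v tens) \<Rightarrow> ('e \<Rightarrow> 'v tens) \<Rightarrow> nat" where
  "c_macro A B = card (Vmacro A B // ((macro_edges A B \<union> (macro_edges A B)\<inverse>)\<^sup>*))"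

text \<open>R^{V_macro}: real functions on T supported in V_macro.\<close>
definition Bmacro :: "('e::finite \<Rightarrow> 'v tens) \<Rightarrow> ('e \<Rightarrow> 'v tens) \<Rightarrow> real^'e \<Rightarrow> ('v tens \<Rightarrow> real)" where
  "Bmacro A B x = (\<lambda>u. \<Sum>e\<in>UNIV. x $ e * ((if u = B e then 1 else 0) - (if u = A e then 1 else 0)))"

definition phihat :: "('e \<Rightarrow> 'v tens) \<Rightarrow> ('e \<Rightarrow> 'v tens) \<Rightarrow> ('v tens \<Rightarrow> real) \<Rightarrow> 'v tens" where
  "phihat A B y = (\<lambda>w. \<Sum>u\<in>Vmacro A B. y u * u w)"

definition ker_phihat :: "('e \<Rightarrow> 'v tens) \<Rightarrow> ('e \<Rightarrow> 'v tens) \<Rightarrow> ('v tens \<Rightarrow> real) set" where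
  "ker_phihat A B = {y. (\<forall>u. u \<notin> Vmacro A B \<longrightarrow> y u = 0) \<and> phihat A B y = 0}"

definition fscale :: "real \<Rightarrow> ('a \<Rightarrow> real) \<Rightarrow> ('a \<Rightarrow> real)" where
  "fscale c f = (\<lambda>x. c * f x)"

definition delta :: "('e::finite \<Rightarrow> 'v tens) \<Rightarrow> ('e \<Rightarrow> 'v tens) \<Rightarrow> nat" where
  "delta A B = vector_space.dim fscale (range (Bmacro A B) \<inter> ker_phihat A B)"

definition charpoly :: "real^'n^'n \<Rightarrow> real poly" where
  "charpoly M = det (\<chi> i j. (if i = j then [:0, 1:] else 0) - [:M $ i $ j:])"

definition eigenvalues :: "real^'n^'n \<Rightarrow> real set" where
  "eigenvalues M = {l. \<exists>v. v \<noteq> 0 \<and> M *v v = l *\<^sub>R v}"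

end

(*
  The Gram matrix L = d^T d of the boundary map satisfies x . L x = |d x|^2, so its null space
  is the cycle space Z and rank-nullity gives rank L = |Q1| - dim Z.  The boundary map factors
  as d = phihat o Bmacro through the incidence map of the macrograph, hence
  Z = Bmacro^-1 (Ker phihat); rank-nullity for Bmacro, once on Z and once on all of R^Q1, gives
  |Q1| - dim Z = rank Bmacro - delta, and rank Bmacro = |V_macro| - c_macro as for the incidence
  matrix of any graph: fixing a root in every component, the vectors 1_u - 1_root(u) for the
  other vertices u form a basis of its range.  Finally L is symmetric, hence orthogonally
  diagonalisable (spectral theorem, via maximising the Rayleigh quotient), and
  for a diagonal matrix both the rank and the total multiplicity of the nonzero roots of the
  characteristic polynomial count the nonzero diagonal entries.
*)

theory Submission
  imports Defs
begin

section \<open>Symmetric real matrices\<close>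

lemma rank_plus_dim_null_space:
  fixes A :: "real^'n^'m"
  shows "rank A + dim {x. A *v x = 0} = CARD('n)"
proof -
  \<comment> \<open>The null space is the orthogonal complement of the row space.\<close>
  let ?R = "range (\<lambda>u. transpose A *v u)"
  have "subspace ?R"
    by (rule linear_subspace_image[OF matrix_vector_mul_linear subspace_UNIV])
  moreover have "{x. A *v x = 0} = {y. \<forall>x\<in>?R. orthogonal x y}"
  proof (intro set_eqI iffI)
    fix y assume "y \<in> {y. \<forall>x\<in>?R. orthogonal x y}"
    then have "orthogonal (transpose A *v (A *v y)) y" by blast
    then show "y \<in> {x. A *v x = 0}" by (simp add: orthogonal_def dot_lmul_matrix)
  qed (auto simp: orthogonal_def dot_lmul_matrix)
  ultimately have "dim {x. A *v x = 0} + dim ?R = CARD('n)"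
    using dim_subspace_orthogonal_to_vectors[of ?R UNIV] by simp
  moreover have "rank A = dim ?R" by (metis rank_transpose rank_dim_range)
  ultimately show ?thesis by linarith
qed

lemma symmetric_matrix_inner:
  fixes M :: "real^'n^'n"
  assumes "transpose M = M"
  shows "(M *v x) \<bullet> y = x \<bullet> (M *v y)"
  by (metis assms dot_lmul_matrix transpose_matrix_vector)

lemma nonpos_quadratic_imp_linear_coeff_zero:
  fixes a b :: real
  assumes "a \<ge> 0" and "\<And>t. 2 * t * a + t\<^sup>2 * b \<le> 0"
  shows "a = 0"
proof (rule ccontr)
  assume "a \<noteq> 0"
  define t where "t = a / (\<bar>b\<bar> + 1)"
  have "t > 0" "t * \<bar>b\<bar> \<le> a" using \<open>a \<ge> 0\<close> \<open>a \<noteq> 0\<close> by (auto simp: t_def field_simps)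
  moreover have "- \<bar>t * b\<bar> \<le> t * b" by simp
  ultimately have "2 * a + t * b > 0" using \<open>a \<ge> 0\<close> \<open>a \<noteq> 0\<close> by (simp add: abs_mult)
  then have "t * (2 * a + t * b) > 0" using \<open>t > 0\<close> by simp
  with assms(2)[of t] show False by (simp add: algebra_simps power2_eq_square)
qed

lemma symmetric_matrix_has_eigenvector_in_invariant_subspace:
  fixes M :: "real^'n^'n"
  assumes sym: "transpose M = M" and S: "subspace S" "S \<noteq> {0}"
    and inv: "\<And>x. x \<in> S \<Longrightarrow> M *v x \<in> S"
  obtains x c where "x \<in> S" "norm x = 1" "M *v x = c *\<^sub>R x"
proof -
  define q where "q y = y \<bullet> (M *v y)" for y :: "real^'n"
  define K where "K = S \<inter> sphere 0 1"
  have "compact K" unfolding K_def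
    using S(1) closed_subspace compact_sphere by (intro closed_Int_compact) auto
  moreover have "K \<noteq> {}"
  proof -
    obtain y where "y \<in> S" "y \<noteq> 0" using S subspace_0 by blast
    then have "(1 / norm y) *\<^sub>R y \<in> K" using S(1) by (simp add: K_def subspace_scale)
    then show ?thesis by blast
  qed
  moreover have "continuous_on K q" unfolding q_def
    by (intro continuous_intros linear_continuous_on matrix_vector_mul_bounded_linear)
  ultimately obtain x where "x \<in> K" and x_max: "\<And>y. y \<in> K \<Longrightarrow> q y \<le> q x"
    using continuous_attains_sup by metis
  define l where "l = q x"
  have xS: "x \<in> S" and xx: "x \<bullet> x = 1" using \<open>x \<in> K\<close> by (auto simp: K_def norm_eq_1)
  have rayleigh: "q w \<le> l * (w \<bullet> w)" if "w \<in> S" for w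
  proof (cases "w = 0")
    case False
    then have "(1 / norm w) *\<^sub>R w \<in> K" using that S(1) by (simp add: K_def subspace_scale)
    then have "q ((1 / norm w) *\<^sub>R w) \<le> l" using x_max by (simp add: l_def)
    then have "q w / (norm w)\<^sup>2 \<le> l"
      by (simp add: q_def matrix_vector_mult_scaleR power2_eq_square)
    then show ?thesis using False by (simp add: field_simps power2_norm_eq_inner)
  qed (simp add: q_def)
  \<comment> \<open>\<open>x\<close> maximises the Rayleigh quotient on \<open>S\<close>; moving \<open>x\<close> inside \<open>S\<close> in the direction of
    the residual \<open>z\<close> would increase it to first order unless \<open>z = 0\<close>.\<close>
  define z where "z = M *v x - l *\<^sub>R x"
  have zS: "z \<in> S" using S(1) xS inv by (simp add: z_def subspace_diff subspace_scale)
  have xz: "x \<bullet> z = 0" using xx by (simp add: z_def inner_diff_right l_def q_def)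
  have "2 * t * (z \<bullet> z) + t\<^sup>2 * (q z - l * (z \<bullet> z)) \<le> 0" for t
  proof -
    have "x + t *\<^sub>R z \<in> S" using S(1) xS zS by (simp add: subspace_add subspace_scale)
    moreover have "q (x + t *\<^sub>R z) = l + 2 * t * (z \<bullet> z) + t\<^sup>2 * q z"
    proof -
      have "M *v x = z + l *\<^sub>R x" by (simp add: z_def)
      then have "z \<bullet> (M *v x) = z \<bullet> z" using xz by (simp add: inner_add_right inner_commute)
      moreover have "x \<bullet> (M *v z) = z \<bullet> (M *v x)"
        using symmetric_matrix_inner[OF sym, of z x] by (simp add: inner_commute)
      ultimately show ?thesis
        by (simp add: q_def l_def inner_commute power2_eq_square algebra_simps)
    qed
    moreover have "(x + t *\<^sub>R z) \<bullet> (x + t *\<^sub>R z) = 1 + t\<^sup>2 * (z \<bullet> z)"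
      using xx xz by (simp add: inner_add_left inner_add_right inner_commute power2_eq_square)
    ultimately show ?thesis using rayleigh[of "x + t *\<^sub>R z"] by (simp add: algebra_simps)
  qed
  then have "z \<bullet> z = 0" by (intro nonpos_quadratic_imp_linear_coeff_zero) simp_all
  then have "M *v x = l *\<^sub>R x" by (simp add: z_def)
  with xS xx that show ?thesis by (simp add: norm_eq_1)
qed

lemma symmetric_matrix_orthonormal_eigenbasis_of_invariant_subspace:
  fixes M :: "real^'n^'n"
  assumes sym: "transpose M = M" and "subspace S" and "\<And>x. x \<in> S \<Longrightarrow> M *v x \<in> S"
  shows "\<exists>B\<subseteq>S. pairwise orthogonal B \<and> (\<forall>b\<in>B. norm b = 1) \<and> span B = S \<and>
    (\<forall>b\<in>B. \<exists>c. M *v b = c *\<^sub>R b)"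
  using assms(2,3)
proof (induction "dim S" arbitrary: S rule: less_induct)
  case less
  show ?case
  proof (cases "S = {0}")
    case True
    then show ?thesis by (intro exI[of _ "{}"]) auto
  next
    case False
    obtain x c where xS: "x \<in> S" and nx: "norm x = 1" and ev: "M *v x = c *\<^sub>R x"
      using symmetric_matrix_has_eigenvector_in_invariant_subspace[OF sym less.prems(1) False]
        less.prems(2) by metis
    define S' where "S' = S \<inter> {y. orthogonal x y}"
    have "subspace S'"
      unfolding S'_def by (rule subspace_inter[OF less.prems(1) subspace_orthogonal_to_vector])
    moreover have "M *v y \<in> S'" if "y \<in> S'" for y
    proof -
      have "x \<bullet> (M *v y) = c * (x \<bullet> y)"
        using symmetric_matrix_inner[OF sym, of x y] by (simp add: ev)
      then show ?thesis using that less.prems(2) by (simp add: S'_def orthogonal_def)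
    qed
    moreover have "dim S' < dim S"
    proof (rule dim_psubset)
      have "x \<notin> S'" using nx by (auto simp: S'_def orthogonal_def)
      then have "S' \<subset> S" using xS by (auto simp: S'_def)
      then show "span S' \<subset> span S" using \<open>subspace S'\<close> less.prems(1) by (metis span_eq_iff)
    qed
    ultimately obtain B' where B': "B' \<subseteq> S'" "pairwise orthogonal B'" "\<forall>b\<in>B'. norm b = 1"
      "span B' = S'" "\<forall>b\<in>B'. \<exists>c. M *v b = c *\<^sub>R b"
      using less.hyps by blast
    have "S \<subseteq> span (insert x B')"
    proof
      fix y assume "y \<in> S"
      have "y - (x \<bullet> y) *\<^sub>R x \<in> S'"
        using \<open>y \<in> S\<close> xS less.prems(1) nx
        by (simp add: S'_def orthogonal_def subspace_diff subspace_scale inner_diff_right norm_eq_1)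
      then have "y - (x \<bullet> y) *\<^sub>R x \<in> span (insert x B')"
        using B'(4) span_mono[of B' "insert x B'"] by auto
      then show "y \<in> span (insert x B')"
        by (metis diff_add_cancel span_add span_base span_scale insertI1)
    qed
    moreover have "insert x B' \<subseteq> S" using xS B'(1) by (auto simp: S'_def)
    ultimately show ?thesis
      using B' nx ev less.prems(1)
      by (intro exI[of _ "insert x B'"])
        (auto simp: pairwise_insert S'_def orthogonal_commute span_minimal subset_antisym)
  qed
qed

definition diagonal_matrix :: "('n \<Rightarrow> 'a::zero) \<Rightarrow> 'a^'n^'n" where
  "diagonal_matrix d = (\<chi> i j. if i = j then d i else 0)"

theorem symmetric_matrix_orthogonally_diagonalizable:
  fixes M :: "real^'n^'n"
  assumes sym: "transpose M = M"
  obtains Q d where "orthogonal_matrix Q" "transpose Q ** M ** Q = diagonal_matrix d"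
proof -
  obtain B where B: "pairwise orthogonal B" "\<forall>b\<in>B. norm b = 1" "span B = UNIV"
    "\<forall>b\<in>B. \<exists>c. M *v b = c *\<^sub>R b"
    using symmetric_matrix_orthonormal_eigenbasis_of_invariant_subspace[OF sym subspace_UNIV] by auto
  have "independent B" using B(1,2) by (intro pairwise_orthogonal_independent) auto
  then have "finite B" "card B = CARD('n)"
    using B(3) dim_eq_card_independent[of B] dim_span[of B] by (auto intro: finiteI_independent)
  then obtain \<phi> where \<phi>: "bij_betw \<phi> (UNIV :: 'n set) B"
    using finite_same_card_bij[of "UNIV :: 'n set" B] by auto
  define d where "d j = (SOME c. M *v \<phi> j = c *\<^sub>R \<phi> j)" for j
  have \<phi>B: "\<phi> j \<in> B" for j using bij_betwE[OF \<phi>] by blast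
  have ev: "M *v \<phi> j = d j *\<^sub>R \<phi> j" for j
  proof -
    have "\<exists>c. M *v \<phi> j = c *\<^sub>R \<phi> j" using B(4) \<phi>B by blast
    then show ?thesis unfolding d_def by (rule someI_ex)
  qed
  have orthonormal: "\<phi> i \<bullet> \<phi> j = (if i = j then 1 else 0)" for i j
  proof (cases "i = j")
    case False
    then have "\<phi> i \<noteq> \<phi> j" using bij_betw_imp_inj_on[OF \<phi>] by (auto dest: injD)
    then show ?thesis using B(1) \<phi>B False by (auto simp: pairwise_def orthogonal_def)
  qed (use B(2) \<phi>B in \<open>simp add: norm_eq_1\<close>)
  define Q :: "real^'n^'n" where "Q = (\<chi> i j. \<phi> j $ i)"
  have QtNQ: "(transpose Q ** N ** Q) $ i $ j = \<phi> i \<bullet> (N *v \<phi> j)" for N i j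
  proof -
    have "(transpose Q ** (N ** Q)) $ i $ j = (\<Sum>k\<in>UNIV. \<phi> i $ k * (N *v \<phi> j) $ k)"
      by (simp add: Q_def matrix_matrix_mult_def matrix_vector_mult_def transpose_def)
    then show ?thesis by (simp add: matrix_mul_assoc inner_vec_def)
  qed
  have "(transpose Q ** Q) $ i $ j = \<phi> i \<bullet> \<phi> j" for i j
    using QtNQ[of "mat 1" i j] by simp
  then have "orthogonal_matrix Q" by (simp add: orthogonal_matrix vec_eq_iff orthonormal mat_def)
  moreover have "transpose Q ** M ** Q = diagonal_matrix d"
    using QtNQ[of M] by (simp add: vec_eq_iff ev orthonormal diagonal_matrix_def)
  ultimately show ?thesis using that by blast
qed

lemma rank_similar:
  fixes M P Q :: "real^'n^'n"
  assumes "P ** Q = mat 1" "Q ** P = mat 1"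
  shows "rank (P ** M ** Q) = rank M"
proof (rule antisym)
  show "rank (P ** M ** Q) \<le> rank M" by (meson le_trans rank_mul_le_left rank_mul_le_right)
  have "M = Q ** (P ** M ** Q) ** P" by (metis assms matrix_mul_assoc matrix_mul_lid matrix_mul_rid)
  then show "rank M \<le> rank (P ** M ** Q)" by (metis le_trans rank_mul_le_left rank_mul_le_right)
qed

lemma eigenvalues_similar:
  fixes M P Q :: "real^'n^'n"
  assumes "P ** Q = mat 1" "Q ** P = mat 1"
  shows "eigenvalues (P ** M ** Q) = eigenvalues M"
proof -
  have sub: "eigenvalues (P' ** N ** Q') \<subseteq> eigenvalues N"
    if PQ': "P' ** Q' = mat 1" "Q' ** P' = mat 1" for N P' Q' :: "real^'n^'n"
  proof
    fix l assume "l \<in> eigenvalues (P' ** N ** Q')"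
    then obtain v where v: "v \<noteq> 0" "(P' ** N ** Q') *v v = l *\<^sub>R v"
      by (auto simp: eigenvalues_def)
    have "N *v (Q' *v v) = Q' *v ((P' ** N ** Q') *v v)"
      using PQ'(2) by (simp add: matrix_vector_mul_assoc matrix_mul_assoc)
    then have "N *v (Q' *v v) = l *\<^sub>R (Q' *v v)" by (simp add: v(2) matrix_vector_mult_scaleR)
    moreover have "Q' *v v \<noteq> 0"
      using v(1) PQ'(1) by (metis matrix_vector_mul_assoc matrix_vector_mul_lid matrix_vector_mult_0_right)
    ultimately show "l \<in> eigenvalues N" by (auto simp: eigenvalues_def)
  qed
  have "Q ** (P ** M ** Q) ** P = M" by (metis assms matrix_mul_assoc matrix_mul_lid matrix_mul_rid)
  then show ?thesis using sub[OF assms] sub[OF assms(2,1), of "P ** M ** Q"] by auto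
qed

lemma matrix_mul_diff_left: "(A::'a::ring_1^'n^'m) ** (B - C) = A ** B - A ** C"
  by (simp add: matrix_matrix_mult_def vec_eq_iff sum_subtractf algebra_simps)

lemma matrix_mul_diff_right: "((A::'a::ring_1^'n^'m) - B) ** C = A ** C - B ** C"
  by (simp add: matrix_matrix_mult_def vec_eq_iff sum_subtractf algebra_simps)

lemma mat_mult_commute: "mat k ** (A::'a::comm_semiring_1^'n^'n) = A ** mat k"
  by (simp add: matrix_matrix_mult_def mat_def vec_eq_iff if_distrib if_distribR mult.commute
      cong: if_cong)

lemma map_matrix_const_poly_mult:
  fixes A :: "'a::comm_ring_1^'n^'m" and B :: "'a^'p^'n"
  shows "map_matrix (\<lambda>a. [:a:]) (A ** B) = map_matrix (\<lambda>a. [:a:]) A ** map_matrix (\<lambda>a. [:a:]) B"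
  by (simp add: vec_eq_iff matrix_matrix_mult_def sum_to_poly mult.commute)

lemma charpoly_eq_det: "charpoly M = det (mat [:0, 1:] - map_matrix (\<lambda>a. [:a:]) M)"
  unfolding charpoly_def mat_def map_matrix_def by (rule arg_cong[of _ _ det]) (simp add: vec_eq_iff)

lemma charpoly_similar:
  fixes M P Q :: "real^'n^'n"
  assumes "P ** Q = mat 1"
  shows "charpoly (P ** M ** Q) = charpoly M"
proof -
  let ?C = "map_matrix (\<lambda>a. [:a:]) :: real^'n^'n \<Rightarrow> real poly^'n^'n"
  let ?X = "mat [:0, 1:] :: real poly^'n^'n"
  have CPQ: "?C P ** ?C Q = mat 1"
    using arg_cong[OF assms, of ?C] by (simp add: map_matrix_const_poly_mult mat_def vec_eq_iff)
  have "?C P ** ?X ** ?C Q = ?X"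
    using CPQ by (metis mat_mult_commute matrix_mul_assoc matrix_mul_rid)
  then have "?X - ?C (P ** M ** Q) = ?C P ** (?X - ?C M) ** ?C Q"
    by (simp add: matrix_mul_diff_left matrix_mul_diff_right map_matrix_const_poly_mult)
  then have "charpoly (P ** M ** Q) = det (?C P) * charpoly M * det (?C Q)"
    by (simp add: charpoly_eq_det det_mul)
  also have "\<dots> = charpoly M" using arg_cong[OF CPQ, of det] by (simp add: det_mul det_I)
  finally show ?thesis .
qed

lemma charpoly_diagonal_matrix: "charpoly (diagonal_matrix d) = (\<Prod>i\<in>UNIV. [:- d i, 1:])"
  unfolding charpoly_def by (subst det_diagonal) (simp_all add: diagonal_matrix_def)

lemma diagonal_matrix_vector_mult: "(diagonal_matrix d *v v) $ i = d i * v $ i"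
proof -
  have "(\<Sum>j\<in>UNIV. (if i = j then d i else 0) * v $ j) = (\<Sum>j\<in>UNIV. if i = j then d i * v $ j else 0)"
    by (rule sum.cong) auto
  then show ?thesis by (simp add: diagonal_matrix_def matrix_vector_mult_def)
qed

lemma eigenvalues_diagonal_matrix: "eigenvalues (diagonal_matrix d) = range d"
proof (intro set_eqI iffI)
  fix l assume "l \<in> eigenvalues (diagonal_matrix d)"
  then obtain v where v: "v \<noteq> 0" "diagonal_matrix d *v v = l *\<^sub>R v"
    by (auto simp: eigenvalues_def)
  from \<open>v \<noteq> 0\<close> obtain i where "v $ i \<noteq> 0" by (auto simp: vec_eq_iff)
  have "d i * v $ i = l * v $ i"
    using arg_cong[OF v(2), of "\<lambda>w. w $ i"] by (simp add: diagonal_matrix_vector_mult)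
  with \<open>v $ i \<noteq> 0\<close> show "l \<in> range d" by auto
next
  fix l assume "l \<in> range d"
  then obtain i where "l = d i" by blast
  then have "diagonal_matrix d *v axis i 1 = l *\<^sub>R axis i 1"
    by (simp add: vec_eq_iff diagonal_matrix_vector_mult axis_def)
  moreover have "axis i (1::real) \<noteq> 0" by (simp add: axis_eq_0_iff)
  ultimately show "l \<in> eigenvalues (diagonal_matrix d)" unfolding eigenvalues_def by blast
qed

lemma rank_diagonal_matrix:
  fixes d :: "'n::finite \<Rightarrow> real"
  shows "rank (diagonal_matrix d) = card {i. d i \<noteq> 0}"
proof -
  define c where "c i = axis i (d i)" for i
  have "column i (diagonal_matrix d) = c i" for i
    by (simp add: column_def c_def diagonal_matrix_def axis_def vec_eq_iff)
  then have "columns (diagonal_matrix d) = range c" by (auto simp: columns_def)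
  moreover have "range c - {0} = c ` {i. d i \<noteq> 0}" by (auto simp: c_def axis_eq_0_iff)
  ultimately have "rank (diagonal_matrix d) = dim (c ` {i. d i \<noteq> 0})"
    by (metis column_rank_def dim_span span_delete_0)
  moreover have "pairwise orthogonal (c ` {i. d i \<noteq> 0})"
    by (auto simp: pairwise_def orthogonal_def c_def inner_axis_axis)
  then have "independent (c ` {i. d i \<noteq> 0})"
    by (rule pairwise_orthogonal_independent) (auto simp: c_def axis_eq_0_iff)
  moreover have "inj_on c {i. d i \<noteq> 0}" by (auto simp: inj_on_def c_def axis_eq_axis)
  ultimately show ?thesis by (simp add: dim_eq_card_independent card_image)
qed

lemma order_prod_linear_factors:
  fixes d :: "'i \<Rightarrow> 'a::idom"
  assumes "finite I"
  shows "order l (\<Prod>i\<in>I. [:- d i, 1:]) = card {i\<in>I. d i = l}"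
  using assms
proof (induction I rule: finite_induct)
  case (insert j I)
  have "order l [:- d j, 1:] = (if d j = l then 1 else 0)"
    using order_power_n_n[of l 1] by (auto intro: order_0I)
  moreover have "(\<Prod>i\<in>I. [:- d i, 1:]) \<noteq> 0" using insert.hyps(1) by simp
  then have "order l ([:- d j, 1:] * (\<Prod>i\<in>I. [:- d i, 1:]))
      = order l [:- d j, 1:] + order l (\<Prod>i\<in>I. [:- d i, 1:])"
    by (rule order_mult[OF no_zero_divisors, rotated]) simp
  moreover have "{i \<in> insert j I. d i = l} = (if d j = l then insert j else id) {i\<in>I. d i = l}"
    by auto
  ultimately show ?case using insert by (simp add: card_insert_if)
qed (simp add: order_0I)

lemma card_eq_sum_card_fibers:
  fixes d :: "'n::finite \<Rightarrow> 'a::zero"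
  shows "card {i. d i \<noteq> 0} = (\<Sum>l\<in>{l\<in>range d. l \<noteq> 0}. card {i. d i = l})"
proof -
  have "(\<Sum>l\<in>{l\<in>range d. l \<noteq> 0}. \<Sum>i | i \<in> {i. d i \<noteq> 0} \<and> d i = l. 1)
      = (\<Sum>i\<in>{i. d i \<noteq> 0}. 1::nat)"
    by (rule sum.group) auto
  then have "card {i. d i \<noteq> 0} = (\<Sum>l\<in>{l\<in>range d. l \<noteq> 0}. card {i. d i \<noteq> 0 \<and> d i = l})"
    by simp
  also have "\<dots> = (\<Sum>l\<in>{l\<in>range d. l \<noteq> 0}. card {i. d i = l})"
    by (intro sum.cong refl arg_cong[where f = card]) auto
  finally show ?thesis .
qed

theorem rank_eq_sum_nonzero_eigenvalue_orders:
  fixes M :: "real^'n^'n"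
  assumes "transpose M = M"
  shows "rank M = (\<Sum>l\<in>{l\<in>eigenvalues M. l \<noteq> 0}. order l (charpoly M))"
proof -
  obtain Q d where Q: "orthogonal_matrix Q" and D: "transpose Q ** M ** Q = diagonal_matrix d"
    using symmetric_matrix_orthogonally_diagonalizable[OF assms] by blast
  have QQ: "transpose Q ** Q = mat 1" "Q ** transpose Q = mat 1"
    using Q by (auto simp: orthogonal_matrix_def)
  have "rank M = card {i. d i \<noteq> 0}"
    using rank_similar[OF QQ, of M] by (simp add: D rank_diagonal_matrix)
  also have "\<dots> = (\<Sum>l\<in>{l\<in>range d. l \<noteq> 0}. card {i. d i = l})"
    by (rule card_eq_sum_card_fibers)
  also have "\<dots> = (\<Sum>l\<in>{l\<in>eigenvalues M. l \<noteq> 0}. order l (charpoly M))"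
  proof -
    have "eigenvalues M = range d"
      using eigenvalues_similar[OF QQ, of M] by (simp add: D eigenvalues_diagonal_matrix)
    moreover have "charpoly M = (\<Prod>i\<in>UNIV. [:- d i, 1:])"
      using charpoly_similar[OF QQ(1), of M] by (simp add: D charpoly_diagonal_matrix)
    ultimately show ?thesis by (simp add: order_prod_linear_factors)
  qed
  finally show ?thesis .
qed

section \<open>The Gram matrix of the boundary vectors\<close>

lemma tinner_eq_sum_superset:
  assumes "finite W" and "{w. s w \<noteq> 0} \<subseteq> W"
  shows "tinner s t = (\<Sum>w\<in>W. s w * t w)"
  unfolding tinner_def by (rule sum.mono_neutral_left) (use assms in auto)

context
  fixes A B :: "'e::finite \<Rightarrow> 'v tens" and W :: "'v list set"
  assumes W_finite: "finite W" and W_support: "\<And>e w. w \<notin> W \<Longrightarrow> A e w = B e w"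
begin

lemma gramL_entry: "gramL A B $ e $ f = (\<Sum>w\<in>W. (B e w - A e w) * (B f w - A f w))"
proof -
  have "{w. (B e - A e) w \<noteq> 0} \<subseteq> W" using W_support by force
  then show ?thesis by (simp add: gramL_def tinner_eq_sum_superset[OF W_finite])
qed

lemma gramL_mult_vector: "(gramL A B *v x) $ e = (\<Sum>w\<in>W. (B e w - A e w) * bdry A B x w)"
proof -
  have "(gramL A B *v x) $ e = (\<Sum>f\<in>UNIV. (\<Sum>w\<in>W. (B e w - A e w) * (B f w - A f w)) * x $ f)"
    by (simp add: matrix_vector_mult_def gramL_entry)
  also have "\<dots> = (\<Sum>f\<in>UNIV. \<Sum>w\<in>W. (B e w - A e w) * (x $ f * (B f w - A f w)))"
    by (simp add: sum_distrib_right sum_distrib_left mult_ac)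
  also have "\<dots> = (\<Sum>w\<in>W. (B e w - A e w) * bdry A B x w)"
    by (subst sum.swap) (simp add: bdry_def sum_distrib_left)
  finally show ?thesis .
qed

lemma inner_gramL_mult_vector: "x \<bullet> (gramL A B *v x) = (\<Sum>w\<in>W. (bdry A B x w)\<^sup>2)"
proof -
  have "x \<bullet> (gramL A B *v x) = (\<Sum>e\<in>UNIV. \<Sum>w\<in>W. x $ e * (B e w - A e w) * bdry A B x w)"
    by (simp add: inner_vec_def gramL_mult_vector sum_distrib_left mult.assoc)
  also have "\<dots> = (\<Sum>w\<in>W. (bdry A B x w)\<^sup>2)"
    by (subst sum.swap) (simp add: bdry_def sum_distrib_right power2_eq_square)
  finally show ?thesis .
qed

end

lemma fin_supp_common_support:
  fixes A B :: "'e::finite \<Rightarrow> 'v tens"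
  assumes "\<And>e. fin_supp (A e)" and "\<And>e. fin_supp (B e)"
  obtains W where "finite W" and "\<And>e w. w \<notin> W \<Longrightarrow> A e w = B e w"
proof -
  define W where "W = (\<Union>e. {w. A e w \<noteq> 0} \<union> {w. B e w \<noteq> 0})"
  have "finite W" using assms by (simp add: W_def fin_supp_def)
  moreover have "A e w = B e w" if "w \<notin> W" for e w using that by (simp add: W_def)
  ultimately show thesis using that by blast
qed

lemma gramL_symmetric:
  assumes "\<And>e. fin_supp (A e)" and "\<And>e. fin_supp (B e)"
  shows "transpose (gramL A B) = gramL A B"
proof -
  obtain W where W: "finite W" "\<And>e w. w \<notin> W \<Longrightarrow> A e w = B e w"
    using fin_supp_common_support[of A B, OF assms] by blast
  show ?thesis
    by (simp add: vec_eq_iff transpose_def gramL_entry[where A = A and B = B, OF W] mult.commute)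
qed

lemma null_space_gramL:
  assumes "\<And>e. fin_supp (A e)" and "\<And>e. fin_supp (B e)"
  shows "{x. gramL A B *v x = 0} = cycles A B"
proof -
  obtain W where W: "finite W" "\<And>e w. w \<notin> W \<Longrightarrow> A e w = B e w"
    using fin_supp_common_support[of A B, OF assms] by blast
  have "bdry A B x w = 0" if "gramL A B *v x = 0" for x w
  proof (cases "w \<in> W")
    case True
    have "(\<Sum>w\<in>W. (bdry A B x w)\<^sup>2) = 0"
      using inner_gramL_mult_vector[where A = A and B = B, OF W, of x] that by simp
    then show ?thesis
      using sum_nonneg_eq_0_iff[OF W(1), of "\<lambda>w. (bdry A B x w)\<^sup>2"] True by simp
  qed (simp add: W(2) bdry_def)
  then show ?thesis
    by (auto simp: cycles_def vec_eq_iff fun_eq_iff gramL_mult_vector[where A = A and B = B, OF W])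
qed

section \<open>Incidence vectors of a graph\<close>

interpretation fs: vector_space "fscale :: real \<Rightarrow> ('a \<Rightarrow> real) \<Rightarrow> ('a \<Rightarrow> real)"
  by unfold_locales (auto simp: fscale_def fun_eq_iff algebra_simps)

lemma dim_image_plus_dim_kernel:
  fixes f :: "'a::euclidean_space \<Rightarrow> 'b::ab_group_add" and s :: "real \<Rightarrow> 'b \<Rightarrow> 'b"
  assumes lin: "Vector_Spaces.linear (*\<^sub>R) s f" and S: "subspace S"
  shows "vector_space.dim s (f ` S) + dim (S \<inter> {x. f x = 0}) = dim S"
proof -
  interpret f: Vector_Spaces.linear "(*\<^sub>R)" s f by (fact lin)
  interpret finite_dimensional_vector_space_pair_1 "(*\<^sub>R)" Basis s by unfold_locales
  \<comment> \<open>\<open>f\<close> maps the orthogonal complement \<open>C\<close> of the kernel in \<open>S\<close> injectively onto \<open>f ` S\<close>.\<close>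
  define K where "K = S \<inter> {x. f x = 0}"
  define C where "C = S \<inter> {y. \<forall>x\<in>K. orthogonal x y}"
  have K: "subspace K" unfolding K_def
    by (rule subspace_inter[OF S]) (use f.subspace_kernel in \<open>simp add: subspace_raw_def\<close>)
  have C: "subspace C" unfolding C_def
    by (rule subspace_inter[OF S subspace_orthogonal_to_vectors])
  have span_K: "span K = K" and span_C: "span C = C" using K C span_eq_iff by blast+
  have "dim C + dim K = dim S"
    unfolding C_def using dim_subspace_orthogonal_to_vectors[OF K S] by (simp add: K_def Int_def)
  moreover have "f ` S = f ` C"
  proof
    show "f ` S \<subseteq> f ` C"
    proof
      fix v assume "v \<in> f ` S"
      then obtain s where s: "s \<in> S" "v = f s" by blast
      obtain y z where yz: "y \<in> span K" "\<And>w. w \<in> span K \<Longrightarrow> orthogonal z w" "s = y + z"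
        using orthogonal_subspace_decomp_exists[of K s] by metis
      have "y \<in> K" using yz(1) span_K by simp
      then have "z \<in> S" using yz(3) s(1) S by (metis K_def IntD1 add_diff_cancel_left' subspace_diff)
      moreover have "\<forall>x\<in>K. orthogonal x z" using yz(2) span_K by (simp add: orthogonal_commute)
      ultimately have "z \<in> C" by (simp add: C_def)
      moreover have "f s = f z" using yz(3) \<open>y \<in> K\<close> by (simp add: K_def f.add)
      ultimately show "v \<in> f ` C" using s by blast
    qed
  qed (auto simp: C_def)
  moreover have "inj_on f (span C)"
  proof -
    have "a = b" if "a \<in> C" "b \<in> C" "f a = f b" for a b
    proof -
      have "a - b \<in> C" using that C subspace_diff by blast
      moreover have "a - b \<in> K" using that(3) \<open>a - b \<in> C\<close> by (simp add: K_def C_def f.diff)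
      ultimately show "a = b" by (auto simp: C_def orthogonal_def)
    qed
    then show ?thesis unfolding span_C by (auto simp: inj_on_def)
  qed
  then have "vector_space.dim s (f ` C) = dim C"
    using dim_image_eq[OF lin] by (simp add: span_raw_def dim_raw_def)
  ultimately show ?thesis by (simp add: K_def)
qed

lemma incidence_vector_in_span_of_edges:
  assumes "(a, b) \<in> (E \<union> E\<inverse>)\<^sup>*"
  shows "(indicator {b} - indicator {a} :: 'a \<Rightarrow> real)
    \<in> fs.span ((\<lambda>(a, b). indicator {b} - indicator {a}) ` E)"
  using assms
proof (induction rule: rtrancl_induct)
  case base
  show ?case by (simp only: diff_self fs.span_zero)
next
  case (step b c)
  let ?X = "(\<lambda>(a, b). indicator {b} - indicator {a} :: 'a \<Rightarrow> real) ` E"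
  have "indicator {c} - indicator {b} \<in> fs.span ?X"
  proof (cases "(b, c) \<in> E")
    case True
    then show ?thesis by (force intro: fs.span_base)
  next
    case False
    then have "indicator {b} - indicator {c} \<in> fs.span ?X"
      using step.hyps(2) by (force intro: fs.span_base)
    then show ?thesis using fs.span_neg by fastforce
  qed
  then have "(indicator {c} - indicator {b}) + (indicator {b} - indicator {a}) \<in> fs.span ?X"
    using step.IH by (rule fs.span_add)
  moreover have "(indicator {c} - indicator {b}) + (indicator {b} - indicator {a})
      = (indicator {c} - indicator {a} :: 'a \<Rightarrow> real)"
    by (simp add: algebra_simps)
  ultimately show ?case by (simp only:)
qed

lemma sum_fun_apply: "(\<Sum>i\<in>I. f i) x = (\<Sum>i\<in>I. f i x)"
  by (induction I rule: infinite_finite_induct) simp_all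

lemma dim_incidence_vectors:
  fixes E :: "('a \<times> 'a) set"
  assumes V: "finite V" and E: "E \<subseteq> V \<times> V"
  shows "fs.dim ((\<lambda>(a, b). indicator {b} - indicator {a} :: 'a \<Rightarrow> real) ` E)
    = card V - card (V // (E \<union> E\<inverse>)\<^sup>*)"
proof -
  define R where "R = (E \<union> E\<inverse>)\<^sup>*"
  define X where "X = (\<lambda>(a, b). indicator {b} - indicator {a} :: 'a \<Rightarrow> real) ` E"
  have R: "equiv UNIV R"
    unfolding R_def equiv_def
    by (simp add: refl_rtrancl sym_rtrancl[OF sym_Un_converse] trans_rtrancl)
  \<comment> \<open>\<open>rep u\<close> depends only on the component of \<open>u\<close>; the \<open>Roots\<close> are one vertex per component.\<close>
  define rep where "rep u = (SOME w. w \<in> R `` {u})" for u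
  have rep_R: "(u, rep u) \<in> R" for u
    using someI[of "\<lambda>w. w \<in> R `` {u}" u] by (simp add: rep_def R_def)
  have rep_eq: "rep u = rep u'" if "(u, u') \<in> R" for u u'
    unfolding rep_def using equiv_class_eq[OF R that] by simp
  have rep_rep: "rep (rep u) = rep u" for u using rep_eq[OF rep_R] by simp
  have R_V: "b \<in> V" if "(a, b) \<in> R" "a \<in> V" for a b
    using that unfolding R_def by (induction rule: rtrancl_induct) (use E in auto)
  define Roots where "Roots = rep ` V"
  have "Roots \<subseteq> V" using R_V rep_R by (auto simp: Roots_def)
  have "bij_betw (\<lambda>w. R `` {w}) Roots (V // R)"
  proof (rule bij_betw_imageI)
    show "inj_on (\<lambda>w. R `` {w}) Roots"
    proof (rule inj_onI)
      fix w w' assume "w \<in> Roots" "w' \<in> Roots" "R `` {w} = R `` {w'}"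
      then have "rep w = rep w'" using rep_eq eq_equiv_class_iff[OF R] by blast
      then show "w = w'" using \<open>w \<in> Roots\<close> \<open>w' \<in> Roots\<close> rep_rep by (auto simp: Roots_def)
    qed
    show "(\<lambda>w. R `` {w}) ` Roots = V // R"
      using equiv_class_eq[OF R rep_R] by (auto simp: quotient_def Roots_def)
  qed
  then have card_Roots: "card Roots = card (V // R)" by (rule bij_betw_same_card)
  define g where "g u = (indicator {u} - indicator {rep u} :: 'a \<Rightarrow> real)" for u
  have g_eval: "g u u' = (if u' = u then 1 else 0)" if "u \<in> V - Roots" "u' \<in> V - Roots" for u u'
    using that by (auto simp: g_def Roots_def indicator_def)
  have g_inj: "inj_on g (V - Roots)"
    by (rule inj_onI) (metis g_eval zero_neq_one)
  define G where "G = g ` (V - Roots)"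
  have "fs.independent G"
  proof (rule fs.independent_if_scalars_zero)
    show "finite G" using V by (simp add: G_def)
  next
    fix c x assume sum0: "(\<Sum>x\<in>G. fscale (c x) x) = 0" and "x \<in> G"
    then obtain u where u: "u \<in> V - Roots" "x = g u" by (auto simp: G_def)
    have "0 = (\<Sum>u'\<in>V - Roots. c (g u') * g u' u)"
      using arg_cong[OF sum0, of "\<lambda>h. h u"] g_inj
      by (simp add: sum_fun_apply fscale_def G_def sum.reindex)
    also have "\<dots> = (\<Sum>u'\<in>V - Roots. if u' = u then c (g u') else 0)"
      using u(1) g_eval by (intro sum.cong) auto
    also have "\<dots> = c (g u)" using u(1) V by simp
    finally show "c x = 0" using u(2) by simp
  qed
  moreover have "fs.span X = fs.span G"
  proof (unfold fs.span_eq, intro conjI)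
    show "X \<subseteq> fs.span G"
    proof
      fix x assume "x \<in> X"
      then obtain a b where ab: "(a, b) \<in> E" "x = indicator {b} - indicator {a}"
        by (auto simp: X_def)
      have g_span: "g u \<in> fs.span G" if "u \<in> V" for u
      proof (cases "u \<in> Roots")
        case True
        then have "g u = 0" using rep_eq[OF rep_R] by (auto simp: g_def Roots_def)
        then show ?thesis by (simp add: fs.span_zero)
      qed (use that in \<open>auto simp: G_def intro: fs.span_base\<close>)
      have "rep a = rep b" using ab(1) by (intro rep_eq) (auto simp: R_def)
      then have "x = g b - g a" by (simp add: ab(2) g_def)
      then show "x \<in> fs.span G" using ab(1) E g_span by (auto intro: fs.span_diff)
    qed
    show "G \<subseteq> fs.span X"
    proof
      fix x assume "x \<in> G"
      then obtain u where "x = g u" by (auto simp: G_def)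
      moreover have "indicator {rep u} - indicator {u} \<in> fs.span X"
        using incidence_vector_in_span_of_edges[of u "rep u" E] rep_R by (simp add: R_def X_def)
      ultimately show "x \<in> fs.span X" by (metis fs.span_neg g_def minus_diff_eq)
    qed
  qed
  ultimately have "fs.dim X = card G" by (metis fs.dim_span fs.dim_span_eq_card_independent)
  also have "\<dots> = card V - card Roots"
    using g_inj V \<open>Roots \<subseteq> V\<close> by (simp add: G_def card_image card_Diff_subset finite_subset)
  finally show ?thesis by (simp add: X_def R_def card_Roots)
qed

section \<open>The macrograph\<close>

lemma Bmacro_linear: "Vector_Spaces.linear (*\<^sub>R) fscale (Bmacro A B)"
  unfolding Vector_Spaces.linear_iff
  by (auto simp: Bmacro_def fscale_def fun_eq_iff distrib_right sum.distrib sum_distrib_left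
      mult.assoc intro: fs.vector_space_axioms real_vector.vector_space_axioms)

lemma Bmacro_axis: "Bmacro A B (axis e 1) = indicator {B e} - indicator {A e}"
proof
  fix u
  have "Bmacro A B (axis e 1) u
      = (\<Sum>i\<in>UNIV. if i = e then (indicator {B i} u - indicator {A i} u :: real) else 0)"
    unfolding Bmacro_def axis_def by (intro sum.cong) (auto simp: indicator_def)
  then show "Bmacro A B (axis e 1) u = (indicator {B e} - indicator {A e}) u" by simp
qed

lemma range_Bmacro:
  fixes A B :: "'e::finite \<Rightarrow> 'v tens"
  shows "range (Bmacro A B)
    = fs.span ((\<lambda>(a, b). indicator {b} - indicator {a}) ` macro_edges A B)"
proof -
  interpret Bm: Vector_Spaces.linear "(*\<^sub>R)" fscale "Bmacro A B" by (rule Bmacro_linear)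
  have "(\<lambda>(a, b). indicator {b} - indicator {a}) ` macro_edges A B = Bmacro A B ` Basis"
    by (fastforce simp: macro_edges_def Basis_vec_def Bmacro_axis image_iff)
  then show ?thesis using Bm.span_image[of Basis] by (simp add: span_raw_def[symmetric])
qed

lemma finite_Vmacro: "finite (Vmacro (A :: 'e::finite \<Rightarrow> 'v tens) B)"
  by (simp add: Vmacro_def)

lemma dim_range_Bmacro: "fs.dim (range (Bmacro A B)) = card (Vmacro A B) - c_macro A B"
proof -
  have "macro_edges A B \<subseteq> Vmacro A B \<times> Vmacro A B" by (auto simp: macro_edges_def Vmacro_def)
  then show ?thesis
    by (simp add: range_Bmacro c_macro_def dim_incidence_vectors finite_Vmacro)
qed

lemma c_macro_le_card_Vmacro:
  fixes A B :: "'e::finite \<Rightarrow> 'v tens"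
  shows "c_macro A B \<le> card (Vmacro A B)"
proof -
  have "Vmacro A B // (macro_edges A B \<union> (macro_edges A B)\<inverse>)\<^sup>*
      = (\<lambda>u. (macro_edges A B \<union> (macro_edges A B)\<inverse>)\<^sup>* `` {u}) ` Vmacro A B"
    by (auto simp: quotient_def)
  then show ?thesis unfolding c_macro_def by (simp only: card_image_le[OF finite_Vmacro])
qed

lemma bdry_eq_phihat_Bmacro: "bdry A B x = phihat A B (Bmacro A B x)"
proof
  fix w
  have evaluate: "(\<Sum>u\<in>Vmacro A B. indicator {v} u * u w) = v w" if "v \<in> Vmacro A B" for v
  proof -
    have "(\<Sum>u\<in>Vmacro A B. indicator {v} u * u w) = (\<Sum>u\<in>Vmacro A B. if u = v then v w else 0)"
      by (rule sum.cong) (auto simp: indicator_def)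
    then show ?thesis using that by (simp add: finite_Vmacro)
  qed
  have "phihat A B (Bmacro A B x) w
      = (\<Sum>u\<in>Vmacro A B. \<Sum>e\<in>UNIV. x $ e * ((indicator {B e} u - indicator {A e} u) * u w))"
    by (simp add: phihat_def Bmacro_def sum_distrib_right mult.assoc indicator_def of_bool_def)
  also have "\<dots> = (\<Sum>e\<in>UNIV.
      x $ e * (\<Sum>u\<in>Vmacro A B. (indicator {B e} u - indicator {A e} u) * u w))"
    by (subst sum.swap) (simp add: sum_distrib_left)
  also have "\<dots> = bdry A B x w"
    using evaluate[of "A _"] evaluate[of "B _"]
    by (simp add: bdry_def left_diff_distrib sum_subtractf Vmacro_def)
  finally show "bdry A B x w = phihat A B (Bmacro A B x) w" ..
qed

lemma range_Bmacro_Int_ker_phihat: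
  "range (Bmacro A B) \<inter> ker_phihat A B = Bmacro A B ` cycles A B"
proof -
  have "Bmacro A B x u = 0" if "u \<notin> Vmacro A B" for x u
    using that by (auto simp: Bmacro_def Vmacro_def intro!: sum.neutral)
  then show ?thesis by (auto simp: ker_phihat_def cycles_def bdry_eq_phihat_Bmacro)
qed

lemma subspace_cycles: "subspace (cycles A B)"
  unfolding subspace_def cycles_def bdry_def
  by (auto simp: fun_eq_iff distrib_right sum.distrib mult.assoc simp flip: sum_distrib_left)

lemma card_edges_minus_dim_cycles:
  fixes A B :: "'e::finite \<Rightarrow> 'v tens"
  shows "int CARD('e) - int (dim (cycles A B))
    = int (card (Vmacro A B)) - int (c_macro A B) - int (delta A B)"
proof -
  let ?K = "{x. Bmacro A B x = 0}"
  have "?K \<subseteq> cycles A B"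
    by (auto simp: cycles_def bdry_eq_phihat_Bmacro phihat_def fun_eq_iff)
  then have "delta A B + dim ?K = dim (cycles A B)"
    using dim_image_plus_dim_kernel[OF Bmacro_linear[of A B] subspace_cycles[of A B]]
    by (simp add: delta_def range_Bmacro_Int_ker_phihat Int_absorb1)
  moreover have "card (Vmacro A B) - c_macro A B + dim ?K = CARD('e)"
    using dim_image_plus_dim_kernel[OF Bmacro_linear[of A B] subspace_UNIV]
    by (simp add: dim_range_Bmacro)
  ultimately show ?thesis using c_macro_le_card_Vmacro[of A B] by linarith
qed

theorem theorem6p5:
  fixes A B :: "'e::finite \<Rightarrow> ('v::finite) list \<Rightarrow> real"
  assumes "\<And>e. fin_supp (A e)" and "\<And>e. fin_supp (B e)"
  shows "int (rank (gramL A B)) = int CARD('e) - int (dim (cycles A B))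
    \<and> int CARD('e) - int (dim (cycles A B))
        = int (card (Vmacro A B)) - int (c_macro A B) - int (delta A B)
    \<and> rank (gramL A B) = (\<Sum>l\<in>{l\<in>eigenvalues (gramL A B). l \<noteq> 0}. order l (charpoly (gramL A B)))"
proof -
  have "rank (gramL A B) + dim (cycles A B) = CARD('e)"
    using rank_plus_dim_null_space[of "gramL A B"] null_space_gramL[of A B, OF assms] by simp
  then have "int (rank (gramL A B)) = int CARD('e) - int (dim (cycles A B))" by linarith
  moreover have "transpose (gramL A B) = gramL A B" by (rule gramL_symmetric[of A B, OF assms])
  ultimately show ?thesis
    using card_edges_minus_dim_cycles[of A B] rank_eq_sum_nonzero_eigenvalue_orders[of "gramL A B"]
    by (intro conjI) simp_all
qed

end
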